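(* For a prime $p$, integers $M$, $N\ge1$, $s\ge1$ and an integer vector $\mathbf{a}=(a_0,\ldots,a_{s-1})$ let $$S_{s,p}(M,N;\mathbf{a})=\sum_{u=M+1}^{M+N}\mathbf{e}_p\Big(\sum_{j=0}^{s-1}a_j q_p(u+j)\Big).$$ Then for any integer $s\ge1$, $$\max_{\gcd(a_0,\ldots,a_{s-1},p)=1}|S_{s,p}(M,N;\mathbf{a})|\ll s\,p\log p$$ uniformly over integers $M$ and $N$ with $p^2>N\ge1$.
   Context: For a prime $p$ and an integer $u$ with $\gcd(u,p)=1$, the Fermat quotient $q_p(u)$ is the unique integer with $q_p(u)\equiv (u^{p-1}-1)/p \pmod p$ and $0\le q_p(u)\le p-1$; also $q_p(kp)=0$ for all $k\in\mathbb{Z}$. $\mathbf{e}_p(z)=\exp(2\pi i z/p)$. $U\ll V$ means $|U|\le cV$ for some constant $c>0$, which may depend on $s$. *)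

theory Defs
  imports "HOL-Analysis.Analysis"
begin

definition fermat_quotient :: "nat \<Rightarrow> int \<Rightarrow> int" where
  "fermat_quotient p u =
     (if int p dvd u then 0 else ((u ^ (p - 1) - 1) div int p) mod int p)"

definition e_p :: "nat \<Rightarrow> int \<Rightarrow> complex" where
  "e_p p z = exp (2 * pi * \<i> * of_int z / of_nat p)"

definition S_sum :: "nat \<Rightarrow> nat \<Rightarrow> int \<Rightarrow> int \<Rightarrow> (nat \<Rightarrow> int) \<Rightarrow> complex" where
  "S_sum s p M N a =
     (\<Sum>u\<in>{M+1..M+N}. e_p p (\<Sum>j<s. a j * fermat_quotient p (u + int j)))"

end

theory Submission
  imports Defs "HOL-Number_Theory.Number_Theory"
begin

text \<open>Write \<open>u = M + 1 + \<rho> + p m\<close> with \<open>\<rho> < p\<close>; as \<open>N < p\<^sup>2\<close>, every residue class contributes at most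
  \<open>p\<close> terms. Since \<open>q\<^sub>p(u + p m) \<equiv> q\<^sub>p(u) - m u\<^sup>p\<^sup>-\<^sup>2 (mod p)\<close>, on a class where none of
  \<open>u, \<dots>, u + s - 1\<close> is divisible by \<open>p\<close> the phase is linear in \<open>m\<close>, and the class sum is a geometric
  sum with ratio \<open>e\<^sub>p(t)\<close>, \<open>t \<equiv> -\<Sum>\<^sub>j a\<^sub>j (u + j)\<^sup>-\<^sup>1\<close>, of size \<open>O(p / min(t, p - t))\<close>.
  Clearing denominators, the classes that produce a given \<open>t\<close> are roots modulo \<open>p\<close> of a polynomial
  of degree at most \<open>s\<close> which the gcd condition keeps nonzero modulo \<open>p\<close>; so each \<open>t\<close> occurs
  at most \<open>s\<close> times and the harmonic sum over \<open>t\<close> gives \<open>O(s p log p)\<close>. The at most \<open>s\<close> remaining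
  classes contribute at most \<open>s p\<close>.\<close>

section \<open>Additive characters and Fermat quotients\<close>

lemma e_p_conv_cis: "e_p p z = cis (2 * pi * of_int z / real p)"
  unfolding e_p_def cis_conv_exp by (simp add: field_simps)

lemma norm_e_p [simp]: "norm (e_p p z) = 1"
  by (simp add: e_p_conv_cis)

lemma e_p_add: "e_p p (x + y) = e_p p x * e_p p y"
  unfolding e_p_def by (simp add: distrib_left add_divide_distrib exp_add)

lemma e_p_of_nat_mult: "e_p p (int k * z) = e_p p z ^ k"
  by (induction k) (auto simp: distrib_right e_p_add, simp add: e_p_def)

lemma e_p_cong:
  assumes "0 < p" and "[x = y] (mod int p)"
  shows "e_p p x = e_p p y"
proof -
  obtain k where y: "y = x + int p * k"
    using assms(2) by (metis cong_iff_lin)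
  have "e_p p (int p * k) = cis (2 * pi * of_int k)"
    unfolding e_p_conv_cis using assms(1) by (simp add: field_simps)
  also have "\<dots> = 1"
    by (rule cis_multiple_2pi) simp
  finally show ?thesis
    by (simp add: y e_p_add)
qed

lemma fermat_theorem_int:
  fixes u :: int
  assumes "prime p" and "\<not> int p dvd u"
  shows "[u ^ (p - 1) = 1] (mod int p)"
proof -
  have "coprime u (int p)"
    using assms prime_imp_coprime[of "int p" u] by (simp add: ac_simps)
  moreover have "residues (int p)"
    using assms(1) prime_gt_1_nat by (simp add: residues_def)
  ultimately show ?thesis
    using residues.euler_theorem[of "int p" u] totient_prime[OF assms(1)] by simp
qed

lemma power_add_mult_cong_mod_square:
  fixes u P k :: int
  shows "[(u + P * k) ^ n = u ^ n + int n * P * k * u ^ (n - 1)] (mod P\<^sup>2)"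
proof (induction n)
  case (Suc n)
  have "[(u + P * k) ^ Suc n = (u + P * k) * (u ^ n + int n * P * k * u ^ (n - 1))] (mod P\<^sup>2)"
    unfolding power_Suc by (intro cong_mult cong_refl Suc.IH)
  also have "(u + P * k) * (u ^ n + int n * P * k * u ^ (n - 1))
      = u ^ Suc n + int (Suc n) * P * k * u ^ (Suc n - 1) + P\<^sup>2 * (int n * k\<^sup>2 * u ^ (n - 1))"
  proof -
    have "u * u ^ (n - 1) * int n = u ^ n * int n"
      by (cases n) auto
    then show ?thesis
      by (simp add: algebra_simps power2_eq_square)
  qed
  also have "[\<dots> = u ^ Suc n + int (Suc n) * P * k * u ^ (Suc n - 1)] (mod P\<^sup>2)"
    by (simp add: cong_def)
  finally show ?case .
qed simp

lemma div_cong_of_cong_mod_square: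
  fixes A B P :: int
  assumes "P dvd A" and "P dvd B" and "[A = B] (mod P\<^sup>2)"
  shows "[A div P = B div P] (mod P)"
proof -
  obtain a b where ab: "A = P * a" "B = P * b"
    using assms(1,2) unfolding dvd_def by blast
  have "P * P dvd P * (a - b)"
    using assms(3) unfolding ab by (simp add: cong_iff_dvd_diff power2_eq_square algebra_simps)
  then have "P = 0 \<or> P dvd a - b"
    by auto
  then show ?thesis
    using ab by (auto simp: cong_iff_dvd_diff)
qed

lemma fermat_quotient_cong_div:
  assumes "\<not> int p dvd u"
  shows "[fermat_quotient p u = (u ^ (p - 1) - 1) div int p] (mod int p)"
  using assms by (simp add: fermat_quotient_def cong_def)

lemma fermat_quotient_add_mult_cong:
  assumes p: "prime p" and u: "\<not> int p dvd u"
  shows "[fermat_quotient p (u + int p * k) = fermat_quotient p u - k * u ^ (p - 2)] (mod int p)"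
proof -
  define P where "P = int p"
  define m where "m = p - 1"
  have p2: "p \<ge> 2"
    using p prime_ge_2_nat by blast
  have uk: "\<not> int p dvd u + int p * k"
    using u by (metis dvd_add_times_triv_right_iff mult.commute)
  obtain \<alpha> where \<alpha>: "u ^ m - 1 = P * \<alpha>"
    using fermat_theorem_int[OF p u] unfolding P_def m_def
    by (metis cong_iff_dvd_diff dvd_def)
  have "u ^ m + int m * P * k * u ^ (m - 1) - 1 = P * (\<alpha> + int m * k * u ^ (m - 1))"
    using \<alpha> by (simp add: algebra_simps)
  then have "[(u + P * k) ^ m - 1 = P * (\<alpha> + int m * k * u ^ (m - 1))] (mod P\<^sup>2)"
    using cong_diff[OF power_add_mult_cong_mod_square[of u P k m] cong_refl[of 1]] by simp
  moreover have "P dvd (u + P * k) ^ m - 1"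
    using fermat_theorem_int[OF p uk] unfolding P_def m_def by (simp add: cong_iff_dvd_diff dvd_diff_commute)
  ultimately have "[((u + P * k) ^ m - 1) div P = P * (\<alpha> + int m * k * u ^ (m - 1)) div P] (mod P)"
    by (intro div_cong_of_cong_mod_square) auto
  then have "[((u + P * k) ^ m - 1) div P = \<alpha> + int m * k * u ^ (m - 1)] (mod P)"
    using p2 unfolding P_def by simp
  also have "[\<alpha> + int m * k * u ^ (m - 1) = \<alpha> - k * u ^ (p - 2)] (mod P)"
  proof -
    have m: "int m = P - 1" "m - 1 = p - 2"
      using p2 unfolding P_def m_def by auto
    have "\<alpha> + int m * k * u ^ (m - 1) - (\<alpha> - k * u ^ (p - 2)) = P * (k * u ^ (p - 2))"
      unfolding m by (simp add: algebra_simps)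
    then show ?thesis
      by (simp add: cong_iff_dvd_diff)
  qed
  also have "[\<alpha> - k * u ^ (p - 2) = fermat_quotient p u - k * u ^ (p - 2)] (mod P)"
    using fermat_quotient_cong_div[OF u] \<alpha> p2 unfolding P_def m_def
    by (intro cong_diff cong_refl) (simp add: cong_sym)
  finally show ?thesis
    using fermat_quotient_cong_div[OF uk] unfolding P_def m_def by (rule cong_trans[rotated])
qed

section \<open>Geometric sums of additive characters\<close>

lemma sin_ge_third:
  assumes "0 \<le> x" and "x \<le> pi / 2"
  shows "x / 3 \<le> sin x"
proof -
  have "\<bar>sin x - (\<Sum>m<3. sin_coeff m * x ^ m)\<bar> \<le> inverse (fact 3) * \<bar>x\<bar> ^ 3"
    by (rule Maclaurin_sin_bound)
  moreover have "(\<Sum>m<3. sin_coeff m * x ^ m) = x"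
    by (simp add: numeral_3_eq_3 sin_coeff_def)
  moreover have "fact 3 = (6::real)"
    by (simp add: fact_numeral)
  ultimately have "x - x ^ 3 / 6 \<le> sin x"
    using assms by (simp add: abs_if split: if_splits)
  moreover have "x ^ 3 \<le> 4 * x"
  proof -
    have "x < 2"
      using assms pi_less_4 by linarith
    then have "x\<^sup>2 \<le> 4"
      using power_mono[of x 2 2] assms by simp
    then show ?thesis
      using mult_left_mono[of "x\<^sup>2" 4 x] assms by (simp add: power3_eq_cube power2_eq_square ac_simps)
  qed
  ultimately show ?thesis
    by linarith
qed

lemma norm_one_minus_cis: "cmod (1 - cis \<theta>) = 2 * \<bar>sin (\<theta> / 2)\<bar>"
proof -
  have "(cmod (1 - cis \<theta>))\<^sup>2 = 2 - 2 * cos \<theta>"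
    by (simp add: cmod_def power2_eq_square algebra_simps sin_squared_eq)
  also have "\<dots> = (2 * \<bar>sin (\<theta> / 2)\<bar>)\<^sup>2"
    using cos_double_sin[of "\<theta> / 2"] by (simp add: power_mult_distrib)
  finally show ?thesis
    by (rule power2_eq_imp_eq) simp_all
qed

lemma norm_sum_power_e_p_le:
  assumes "0 < t" and "t < p"
  shows "cmod (\<Sum>m<L. e_p p (int t) ^ m) \<le> 2 * real p * (1 / real t + 1 / real (p - t))"
proof -
  define \<mu> where "\<mu> = min t (p - t)"
  define x where "x = pi * real \<mu> / real p"
  have \<mu>: "1 \<le> \<mu>" "2 * \<mu> \<le> p"
    using assms unfolding \<mu>_def by auto
  have x: "0 < x" "x \<le> pi / 2"
    using \<mu> unfolding x_def by (auto simp: field_simps)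
  have "sin (pi * real t / real p) = sin x"
  proof (cases "t \<le> p - t")
    case False
    then have "x = pi - pi * real t / real p"
      using assms unfolding x_def \<mu>_def by (simp add: field_simps)
    then show ?thesis
      by simp
  qed (simp add: x_def \<mu>_def)
  then have "\<bar>sin (pi * real t / real p)\<bar> = sin x"
    using x sin_ge_zero[of x] by simp
  then have dist: "cmod (1 - e_p p (int t)) = 2 * sin x"
    unfolding e_p_conv_cis norm_one_minus_cis by simp
  have "real \<mu> / real p \<le> 2 * (x / 3)"
    using pi_ge_two \<mu> unfolding x_def by (auto simp: field_simps)
  then have gap: "real \<mu> / real p \<le> cmod (1 - e_p p (int t))"
    unfolding dist using sin_ge_third[of x] x by linarith
  have pos: "0 < real \<mu> / real p"
    using \<mu> by simp
  have "cmod (\<Sum>m<L. e_p p (int t) ^ m) = cmod (1 - e_p p (int t) ^ L) / cmod (1 - e_p p (int t))"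
    using gap pos by (subst sum_gp_strict) (auto simp: norm_divide)
  also have "\<dots> \<le> 2 / cmod (1 - e_p p (int t))"
    using norm_triangle_ineq4[of 1 "e_p p (int t) ^ L"] by (intro divide_right_mono) (simp_all add: norm_power)
  also have "\<dots> \<le> 2 / (real \<mu> / real p)"
    using gap pos by (intro divide_left_mono mult_pos_pos) auto
  also have "\<dots> = 2 * real p / real \<mu>"
    by simp
  also have "\<dots> \<le> 2 * real p * (1 / real t + 1 / real (p - t))"
  proof -
    have "1 / real \<mu> \<le> 1 / real t + 1 / real (p - t)"
      using assms unfolding \<mu>_def by (auto simp: min_def)
    then have "2 * real p * (1 / real \<mu>) \<le> 2 * real p * (1 / real t + 1 / real (p - t))"
      by (intro mult_left_mono) auto
    then show ?thesis
      by simp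
  qed
  finally show ?thesis .
qed

definition geom_sum_bound :: "nat \<Rightarrow> nat \<Rightarrow> real" where
  "geom_sum_bound p t = (if t = 0 then real p else 2 * real p * (1 / real t + 1 / real (p - t)))"

lemma geom_sum_bound_nonneg: "0 \<le> geom_sum_bound p t"
  by (simp add: geom_sum_bound_def)

lemma norm_sum_power_e_p_le_geom_sum_bound:
  assumes "t < p" and "L \<le> p"
  shows "cmod (\<Sum>m<L. e_p p (int t) ^ m) \<le> geom_sum_bound p t"
proof (cases "t = 0")
  case True
  have "cmod (\<Sum>m<L. e_p p 0 ^ m) \<le> (\<Sum>m<L. cmod (e_p p 0 ^ m))"
    by (rule norm_sum)
  then show ?thesis
    using True assms(2) by (simp add: geom_sum_bound_def norm_power)
next
  case False
  then show ?thesis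
    using norm_sum_power_e_p_le[of t p L] assms(1) by (simp add: geom_sum_bound_def)
qed

lemma harm_le_one_plus_ln: "1 \<le> n \<Longrightarrow> harm n \<le> 1 + ln (real n)"
  using euler_mascheroni_sequence_decreasing[of 1 n] by (simp add: harm_def)

lemma sum_geom_sum_bound_le:
  assumes "2 \<le> p"
  shows "(\<Sum>t<p. geom_sum_bound p t) \<le> real p * (5 + 4 * ln (real p))"
proof -
  have reflect: "(\<Sum>t=1..p-1. 1 / real (p - t)) = (\<Sum>t=1..p-1. 1 / real t)"
    by (rule sum.reindex_bij_witness[of _ "\<lambda>t. p - t" "\<lambda>t. p - t"]) auto
  have harm: "harm (p - 1) \<le> 1 + ln (real p)"
  proof -
    have "harm (p - 1) \<le> 1 + ln (real (p - 1))"
      using assms by (intro harm_le_one_plus_ln) auto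
    also have "ln (real (p - 1)) \<le> ln (real p)"
      using assms by simp
    finally show ?thesis
      by simp
  qed
  have "{..<p} = insert 0 {1..p-1}"
    using assms by auto
  then have "(\<Sum>t<p. geom_sum_bound p t) = real p + (\<Sum>t=1..p-1. geom_sum_bound p t)"
    by (simp add: geom_sum_bound_def)
  also have "(\<Sum>t=1..p-1. geom_sum_bound p t) = (\<Sum>t=1..p-1. 2 * real p * (1 / real t + 1 / real (p - t)))"
    by (rule sum.cong) (auto simp: geom_sum_bound_def)
  also have "\<dots> = 2 * real p * ((\<Sum>t=1..p-1. 1 / real t) + (\<Sum>t=1..p-1. 1 / real (p - t)))"
    by (simp add: sum.distrib[symmetric] sum_distrib_left)
  also have "\<dots> = 4 * real p * harm (p - 1)"
    unfolding reflect harm_def by (simp add: divide_inverse)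
  finally show ?thesis
    using mult_left_mono[OF harm, of "4 * real p"] by (simp add: algebra_simps)
qed

section \<open>Roots of integer polynomials modulo a prime\<close>

lemma not_dvd_if_abs_less:
  fixes d P :: int
  assumes "d \<noteq> 0" and "\<bar>d\<bar> < P"
  shows "\<not> P dvd d"
  using dvd_imp_le_int[OF assms(1)] assms(2) by force

lemma synthetic_div_not_all_coeff_dvd:
  fixes f :: "int poly"
  assumes "P dvd poly f r" and "\<exists>i. \<not> P dvd Polynomial.coeff f i"
  shows "\<exists>i. \<not> P dvd Polynomial.coeff (synthetic_div f r) i"
proof (rule ccontr)
  assume "\<not> ?thesis"
  then have "P dvd Polynomial.coeff ([:-r, 1:] * synthetic_div f r + [:poly f r:]) i" for i
    using assms(1) unfolding coeff_add coeff_mult by (intro dvd_add dvd_sum) (auto simp: coeff_pCons split: nat.split)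
  then have "P dvd Polynomial.coeff f i" for i
    by (simp only: synthetic_div_correct')
  with assms(2) show False
    by blast
qed

lemma card_roots_mod_prime_le_degree:
  fixes f :: "int poly"
  assumes p: "prime p" and "\<exists>i. \<not> int p dvd Polynomial.coeff f i"
  shows "card {x \<in> {c..<c + int p}. int p dvd poly f x} \<le> degree f"
  using assms(2)
proof (induction "degree f" arbitrary: f rule: less_induct)
  case (less f)
  define A where "A = {x \<in> {c..<c + int p}. int p dvd poly f x}"
  show ?case
  proof (cases "A = {}")
    case False
    then obtain r where r: "r \<in> {c..<c + int p}" "int p dvd poly f r"
      unfolding A_def by auto
    define q where "q = synthetic_div f r"
    have q: "\<exists>i. \<not> int p dvd Polynomial.coeff q i"
      unfolding q_def using synthetic_div_not_all_coeff_dvd r(2) less.prems by blast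
    then have "q \<noteq> 0"
      by auto
    then have "degree q < degree f"
      unfolding q_def by (simp add: synthetic_div_eq_0_iff degree_synthetic_div)
    define R where "R = {x \<in> {c..<c + int p}. int p dvd poly q x}"
    have "card R \<le> degree q"
      unfolding R_def using less.hyps \<open>degree q < degree f\<close> q by blast
    have "finite R"
      unfolding R_def by (rule finite_subset[of _ "{c..<c + int p}"]) auto
    have "A \<subseteq> insert r R"
    proof
      fix x assume x: "x \<in> A"
      have "poly f x = (x - r) * poly q x + poly f r"
        by (subst synthetic_div_correct'[of r f, symmetric]) (simp add: q_def algebra_simps)
      then have "int p dvd (x - r) * poly q x"
        using x r(2) unfolding A_def by (metis dvd_add_left_iff mem_Collect_eq)
      moreover have "x - r = 0 \<or> \<not> int p dvd x - r"
        using x r(1) not_dvd_if_abs_less[of "x - r" "int p"] unfolding A_def by (auto simp: abs_less_iff)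
      ultimately show "x \<in> insert r R"
        using x p prime_dvd_mult_iff[of "int p"] unfolding A_def R_def by auto
    qed
    then have "card A \<le> card (insert r R)"
      using \<open>finite R\<close> by (intro card_mono) auto
    also have "\<dots> \<le> Suc (card R)"
      using \<open>finite R\<close> by (simp add: card_insert_if)
    finally show ?thesis
      using \<open>card R \<le> degree q\<close> \<open>degree q < degree f\<close> unfolding A_def by linarith
  qed (unfold A_def[symmetric], simp)
qed

text \<open>The rational function \<open>\<Sum>\<^sub>j a\<^sub>j / (x + j) + t\<close> with its denominators cleared.\<close>

definition cleared_poly :: "nat \<Rightarrow> (nat \<Rightarrow> int) \<Rightarrow> int \<Rightarrow> int poly" where
  "cleared_poly s a t =
     (\<Sum>j<s. Polynomial.smult (a j) (\<Prod>i\<in>{..<s} - {j}. [:int i, 1:])) + Polynomial.smult t (\<Prod>i<s. [:int i, 1:])"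

lemma degree_cleared_poly_le: "degree (cleared_poly s a t) \<le> s"
proof -
  have linear_prod: "degree (\<Prod>i\<in>I. [:int i, 1:]) \<le> s" if "I \<subseteq> {..<s}" for I
  proof -
    have "finite I"
      using that finite_subset by blast
    then have "degree (\<Prod>i\<in>I. [:int i, 1:]) = card I"
      by (subst degree_prod_eq_sum_degree) auto
    also have "\<dots> \<le> s"
      using card_mono[OF _ that] by simp
    finally show ?thesis .
  qed
  show ?thesis
    unfolding cleared_poly_def
    by (intro degree_add_le degree_sum_le order.trans[OF degree_smult_le] linear_prod) auto
qed

lemma poly_cleared_poly:
  "poly (cleared_poly s a t) x = (\<Sum>j<s. a j * (\<Prod>i\<in>{..<s} - {j}. x + int i)) + t * (\<Prod>i<s. x + int i)"
  unfolding cleared_poly_def by (simp add: poly_sum poly_prod add.commute)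

lemma poly_cleared_poly_at_pole:
  assumes "j < s"
  shows "poly (cleared_poly s a t) (- int j) = a j * (\<Prod>i\<in>{..<s} - {j}. int i - int j)"
proof -
  have "(\<Sum>k\<in>{..<s} - {j}. a k * (\<Prod>i\<in>{..<s} - {k}. int i - int j)) = 0"
    using assms by (intro sum.neutral ballI) (auto intro!: prod_zero bexI[of _ j])
  moreover have "(\<Prod>i<s. int i - int j) = 0"
    using assms by (intro prod_zero bexI[of _ j]) auto
  ultimately show ?thesis
    unfolding poly_cleared_poly using assms by (simp add: sum.remove)
qed

lemma cleared_poly_not_all_coeff_dvd:
  assumes p: "prime p" and "s < p" and "j < s" and "\<not> int p dvd a j"
  shows "\<exists>i. \<not> int p dvd Polynomial.coeff (cleared_poly s a t) i"
proof -
  have "\<not> int p dvd int i - int j" if "i \<in> {..<s} - {j}" for i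
    using that assms(2,3) by (intro not_dvd_if_abs_less) auto
  then have "\<not> int p dvd (\<Prod>i\<in>{..<s} - {j}. int i - int j)"
    using p by (subst prime_dvd_prod_iff) auto
  then have "\<not> int p dvd poly (cleared_poly s a t) (- int j)"
    using assms p prime_dvd_mult_iff[of "int p"] by (simp add: poly_cleared_poly_at_pole)
  moreover have "int p dvd poly f y" if "\<forall>i. int p dvd Polynomial.coeff f i" for f y
    using that by (simp add: poly_altdef dvd_sum)
  ultimately show ?thesis
    by blast
qed

lemma cleared_poly_root_mod_prime:
  assumes p: "prime p" and units: "\<forall>j<s. \<not> int p dvd x + int j"
    and root: "[(\<Sum>j<s. a j * (x + int j) ^ (p - 2)) + t = 0] (mod int p)"
  shows "int p dvd poly (cleared_poly s a t) x"
proof -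
  define Q where "Q = (\<Prod>i<s. x + int i)"
  have p2: "p \<ge> 2"
    using p prime_ge_2_nat by blast
  have "[a j * (\<Prod>i\<in>{..<s} - {j}. x + int i) = a j * (x + int j) ^ (p - 2) * Q] (mod int p)"
    if j: "j < s" for j
  proof -
    have "p - 1 = Suc (p - 2)"
      using p2 by simp
    then have "a j * (x + int j) ^ (p - 2) * Q = a j * (\<Prod>i\<in>{..<s} - {j}. x + int i) * (x + int j) ^ (p - 1)"
      using j unfolding Q_def by (simp add: prod.remove ac_simps)
    moreover have "[(x + int j) ^ (p - 1) = 1] (mod int p)"
      using fermat_theorem_int[OF p] units j by blast
    ultimately show ?thesis
      by (metis cong_scalar_left cong_sym mult.right_neutral)
  qed
  then have "[poly (cleared_poly s a t) x = (\<Sum>j<s. a j * (x + int j) ^ (p - 2) * Q) + t * Q] (mod int p)"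
    unfolding poly_cleared_poly Q_def[symmetric] by (intro cong_add cong_sum cong_refl) auto
  also have "(\<Sum>j<s. a j * (x + int j) ^ (p - 2) * Q) + t * Q = ((\<Sum>j<s. a j * (x + int j) ^ (p - 2)) + t) * Q"
    by (simp add: sum_distrib_right distrib_right)
  also have "[\<dots> = 0 * Q] (mod int p)"
    using root by (rule cong_mult[OF _ cong_refl])
  finally show ?thesis
    by (simp add: cong_0_iff)
qed

section \<open>Sums over a residue class\<close>

definition fq_phase :: "nat \<Rightarrow> nat \<Rightarrow> (nat \<Rightarrow> int) \<Rightarrow> int \<Rightarrow> int" where
  "fq_phase s p a u = (\<Sum>j<s. a j * fermat_quotient p (u + int j))"

text \<open>Modulo \<open>p\<close>, \<open>(u + j)\<^sup>p\<^sup>-\<^sup>2\<close> is the inverse of \<open>u + j\<close>; so the slope is \<open>\<Sum>\<^sub>j a\<^sub>j / (u + j)\<close>,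
  which relates it to \<open>cleared_poly\<close>.\<close>

definition fq_slope :: "nat \<Rightarrow> nat \<Rightarrow> (nat \<Rightarrow> int) \<Rightarrow> int \<Rightarrow> int" where
  "fq_slope s p a u = (\<Sum>j<s. a j * (u + int j) ^ (p - 2))"

lemma fq_phase_add_mult_cong:
  assumes p: "prime p" and units: "\<forall>j<s. \<not> int p dvd u + int j"
  shows "[fq_phase s p a (u + int p * k) = fq_phase s p a u - k * fq_slope s p a u] (mod int p)"
proof -
  have "[fq_phase s p a (u + int p * k)
      = (\<Sum>j<s. a j * (fermat_quotient p (u + int j) - k * (u + int j) ^ (p - 2)))] (mod int p)"
    unfolding fq_phase_def
  proof (intro cong_sum cong_mult cong_refl)
    fix j assume "j \<in> {..<s}"
    then show "[fermat_quotient p (u + int p * k + int j)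
        = fermat_quotient p (u + int j) - k * (u + int j) ^ (p - 2)] (mod int p)"
      using fermat_quotient_add_mult_cong[OF p, of "u + int j" k] units by (simp add: ac_simps)
  qed
  also have "(\<Sum>j<s. a j * (fermat_quotient p (u + int j) - k * (u + int j) ^ (p - 2)))
      = fq_phase s p a u - k * fq_slope s p a u"
    unfolding fq_phase_def fq_slope_def by (simp add: sum_subtractf sum_distrib_left algebra_simps)
  finally show ?thesis .
qed

lemma norm_residue_class_sum_le:
  assumes p: "prime p" and units: "\<forall>j<s. \<not> int p dvd u + int j" and "L \<le> p"
  shows "cmod (\<Sum>m<L. e_p p (fq_phase s p a (u + int p * int m)))
    \<le> geom_sum_bound p (nat (- fq_slope s p a u mod int p))"
proof -
  define t where "t = nat (- fq_slope s p a u mod int p)"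
  have "0 < p"
    using p prime_gt_0_nat by blast
  then have t: "t < p" "[int t = - fq_slope s p a u] (mod int p)"
    unfolding t_def by (auto simp: cong_def nat_less_iff)
  have "e_p p (fq_phase s p a (u + int p * int m)) = e_p p (fq_phase s p a u) * e_p p (int t) ^ m" for m
  proof -
    have "[fq_phase s p a (u + int p * int m) = fq_phase s p a u + int m * (- fq_slope s p a u)] (mod int p)"
      using fq_phase_add_mult_cong[OF p units, of a "int m"] by simp
    also have "[fq_phase s p a u + int m * (- fq_slope s p a u) = fq_phase s p a u + int m * int t] (mod int p)"
      using t(2) by (intro cong_add cong_mult cong_refl) (simp add: cong_sym)
    finally show ?thesis
      using e_p_cong[OF \<open>0 < p\<close>] by (simp add: e_p_add e_p_of_nat_mult)
  qed
  then have "cmod (\<Sum>m<L. e_p p (fq_phase s p a (u + int p * int m))) = cmod (\<Sum>m<L. e_p p (int t) ^ m)"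
    by (simp add: sum_distrib_left[symmetric] norm_mult)
  also have "\<dots> \<le> geom_sum_bound p t"
    using t(1) assms(3) by (rule norm_sum_power_e_p_le_geom_sum_bound)
  finally show ?thesis
    unfolding t_def .
qed

lemma card_residues_meeting_multiple_le: "card {\<rho> \<in> {..<p}. \<exists>j<s. int p dvd u + int \<rho> + int j} \<le> s"
proof -
  have "{\<rho> \<in> {..<p}. \<exists>j<s. int p dvd u + int \<rho> + int j} \<subseteq> (\<lambda>j. nat ((- u - int j) mod int p)) ` {..<s}"
  proof
    fix \<rho> assume "\<rho> \<in> {\<rho> \<in> {..<p}. \<exists>j<s. int p dvd u + int \<rho> + int j}"
    then obtain j where "\<rho> < p" "j < s" "int p dvd int \<rho> - (- u - int j)"
      by (auto simp: algebra_simps)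
    then have "int \<rho> mod int p = (- u - int j) mod int p"
      by (simp add: cong_iff_dvd_diff[symmetric] cong_def)
    then have "int \<rho> = (- u - int j) mod int p"
      using \<open>\<rho> < p\<close> by simp
    then show "\<rho> \<in> (\<lambda>j. nat ((- u - int j) mod int p)) ` {..<s}"
      using \<open>j < s\<close> by (intro image_eqI[of _ _ j]) auto
  qed
  then have "card {\<rho> \<in> {..<p}. \<exists>j<s. int p dvd u + int \<rho> + int j}
      \<le> card ((\<lambda>j. nat ((- u - int j) mod int p)) ` {..<s})"
    by (intro card_mono) auto
  also have "\<dots> \<le> s"
    using card_image_le[of "{..<s}"] by simp
  finally show ?thesis .
qed

lemma card_slope_fiber_le:
  assumes p: "prime p" and "s < p" and "k < s" and "\<not> int p dvd a k"
  shows "card {\<rho> \<in> {..<p}. (\<forall>j<s. \<not> int p dvd u + int \<rho> + int j)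
      \<and> nat (- fq_slope s p a (u + int \<rho>) mod int p) = t} \<le> s"
    (is "card ?F \<le> s")
proof -
  define R where "R = {x \<in> {u..<u + int p}. int p dvd poly (cleared_poly s a (int t)) x}"
  have "0 < p"
    using p prime_gt_0_nat by blast
  have "(\<lambda>\<rho>. u + int \<rho>) ` ?F \<subseteq> R"
  proof
    fix x assume "x \<in> (\<lambda>\<rho>. u + int \<rho>) ` ?F"
    then obtain \<rho> where \<rho>: "\<rho> \<in> ?F" "x = u + int \<rho>"
      by blast
    then have "int t = - fq_slope s p a x mod int p"
      using \<open>0 < p\<close> by auto
    then have "[fq_slope s p a x + int t = 0] (mod int p)"
      by (simp add: cong_def mod_add_right_eq)
    then have "int p dvd poly (cleared_poly s a (int t)) x"
      using \<rho> by (intro cleared_poly_root_mod_prime[OF p]) (auto simp: fq_slope_def add.assoc)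
    then show "x \<in> R"
      using \<rho> unfolding R_def by auto
  qed
  moreover have "finite R"
    unfolding R_def by (rule finite_subset[of _ "{u..<u + int p}"]) auto
  ultimately have "card ?F \<le> card R"
    by (intro card_inj_on_le[of "\<lambda>\<rho>. u + int \<rho>"]) (auto simp: inj_on_def)
  also have "\<dots> \<le> degree (cleared_poly s a (int t))"
    unfolding R_def using cleared_poly_not_all_coeff_dvd[of p s k a] assms
    by (intro card_roots_mod_prime_le_degree[OF p])
  also have "\<dots> \<le> s"
    by (rule degree_cleared_poly_le)
  finally show ?thesis .
qed

section \<open>The sum \<open>S\<^sub>s\<^sub>,\<^sub>p\<close>\<close>

lemma sum_comp_le_card_fiber_mult:
  fixes B :: "'b \<Rightarrow> real"
  assumes "finite A" and "finite T" and "f ` A \<subseteq> T"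
    and "\<And>t. t \<in> T \<Longrightarrow> card {x \<in> A. f x = t} \<le> k" and "\<And>t. t \<in> T \<Longrightarrow> 0 \<le> B t"
  shows "(\<Sum>x\<in>A. B (f x)) \<le> real k * (\<Sum>t\<in>T. B t)"
proof -
  have "(\<Sum>x\<in>A. B (f x)) = (\<Sum>t\<in>T. \<Sum>x\<in>{x \<in> A. f x = t}. B (f x))"
    using assms(1-3) by (rule sum.group[symmetric])
  also have "\<dots> = (\<Sum>t\<in>T. real (card {x \<in> A. f x = t}) * B t)"
    by (intro sum.cong refl) simp
  also have "\<dots> \<le> (\<Sum>t\<in>T. real k * B t)"
    using assms(4,5) by (intro sum_mono mult_right_mono) auto
  finally show ?thesis
    by (simp add: sum_distrib_left)
qed

lemma less_residue_class_length_iff: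
  assumes "\<rho> < p"
  shows "m < (n + p - Suc \<rho>) div p \<longleftrightarrow> \<rho> + p * m < n"
proof -
  have "m < (n + p - Suc \<rho>) div p \<longleftrightarrow> Suc m * p \<le> n + p - Suc \<rho>"
    using assms by (simp add: less_eq_div_iff_mult_less_eq Suc_le_eq[symmetric])
  also have "\<dots> \<longleftrightarrow> \<rho> + p * m < n"
    using assms by (simp add: algebra_simps) arith
  finally show ?thesis .
qed

lemma residue_class_length_le:
  assumes "n \<le> p * p"
  shows "(n + p - Suc \<rho>) div p \<le> p"
  using assms div_less_iff_less_mult[of p "n + p - Suc \<rho>" "Suc p"] by (cases "p = 0") auto

lemma sum_lessThan_by_residue_classes:
  fixes g :: "nat \<Rightarrow> 'a::comm_monoid_add"
  assumes "0 < p"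
  shows "(\<Sum>d<n. g d) = (\<Sum>\<rho><p. \<Sum>m<(n + p - Suc \<rho>) div p. g (\<rho> + p * m))"
proof -
  define C where "C = (SIGMA \<rho>:{..<p}. {..<(n + p - Suc \<rho>) div p})"
  have "bij_betw (\<lambda>(\<rho>, m). \<rho> + p * m) C {..<n}"
  proof (rule bij_betwI[where g = "\<lambda>d. (d mod p, d div p)"])
    show "(\<lambda>(\<rho>, m). \<rho> + p * m) \<in> C \<rightarrow> {..<n}"
      using less_residue_class_length_iff unfolding C_def by auto
    show "(\<lambda>d. (d mod p, d div p)) \<in> {..<n} \<rightarrow> C"
      using less_residue_class_length_iff[of "_ mod p" p "_ div p" n] assms unfolding C_def by auto
  qed (use assms in \<open>auto simp: C_def\<close>)
  then have "(\<Sum>d<n. g d) = (\<Sum>(\<rho>, m)\<in>C. g (\<rho> + p * m))"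
    by (subst sum.reindex_bij_betw[symmetric]) (auto simp: case_prod_unfold)
  also have "\<dots> = (\<Sum>\<rho><p. \<Sum>m<(n + p - Suc \<rho>) div p. g (\<rho> + p * m))"
    unfolding C_def by (rule sum.Sigma[symmetric]) auto
  finally show ?thesis .
qed

lemma S_sum_eq_sum_residue_classes:
  assumes "1 \<le> N" and "0 < p"
  shows "S_sum s p M N a = (\<Sum>\<rho><p. \<Sum>m<(nat N + p - Suc \<rho>) div p.
    e_p p (fq_phase s p a (M + 1 + int \<rho> + int p * int m)))"
proof -
  have "S_sum s p M N a = (\<Sum>d<nat N. e_p p (fq_phase s p a (M + 1 + int d)))"
    unfolding S_sum_def fq_phase_def using assms(1)
    by (intro sum.reindex_bij_witness[of _ "\<lambda>d. M + 1 + int d" "\<lambda>u. nat (u - M - 1)"]) auto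
  also have "\<dots> = (\<Sum>\<rho><p. \<Sum>m<(nat N + p - Suc \<rho>) div p.
      e_p p (fq_phase s p a (M + 1 + int \<rho> + int p * int m)))"
    by (subst sum_lessThan_by_residue_classes[OF assms(2)]) (simp add: add.assoc)
  finally show ?thesis .
qed

lemma norm_S_sum_le_length:
  assumes "1 \<le> N"
  shows "cmod (S_sum s p M N a) \<le> of_int N"
proof -
  have "cmod (S_sum s p M N a) \<le> (\<Sum>u\<in>{M+1..M+N}. cmod (e_p p (\<Sum>j<s. a j * fermat_quotient p (u + int j))))"
    unfolding S_sum_def by (rule norm_sum)
  also have "\<dots> = of_int N"
    using assms by simp
  finally show ?thesis .
qed

lemma norm_S_sum_le_of_less:
  assumes p: "prime p" and N: "1 \<le> N" "N < int p ^ 2"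
    and "s < p" and "k < s" and "\<not> int p dvd a k"
  shows "cmod (S_sum s p M N a) \<le> real s * real p * (6 + 4 * ln (real p))"
proof -
  define L where "L \<rho> = (nat N + p - Suc \<rho>) div p" for \<rho>
  define u where "u \<rho> = M + 1 + int \<rho>" for \<rho>
  define T where "T \<rho> = (\<Sum>m<L \<rho>. e_p p (fq_phase s p a (u \<rho> + int p * int m)))" for \<rho>
  define \<tau> where "\<tau> \<rho> = nat (- fq_slope s p a (u \<rho>) mod int p)" for \<rho>
  define Bad where "Bad = {\<rho> \<in> {..<p}. \<exists>j<s. int p dvd u \<rho> + int j}"
  define Good where "Good = {\<rho> \<in> {..<p}. \<forall>j<s. \<not> int p dvd u \<rho> + int j}"
  have p2: "2 \<le> p"
    using p prime_ge_2_nat by blast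
  have "nat N < p * p"
    using N by (simp add: power2_eq_square nat_less_iff)
  then have L: "L \<rho> \<le> p" for \<rho>
    unfolding L_def by (intro residue_class_length_le) simp
  have "cmod (S_sum s p M N a) \<le> (\<Sum>\<rho><p. cmod (T \<rho>))"
    unfolding S_sum_eq_sum_residue_classes[OF N(1) prime_gt_0_nat[OF p]] T_def L_def u_def
    by (rule norm_sum)
  also have "\<dots> = (\<Sum>\<rho>\<in>Bad. cmod (T \<rho>)) + (\<Sum>\<rho>\<in>Good. cmod (T \<rho>))"
    by (subst sum.union_disjoint[symmetric]) (auto simp: Bad_def Good_def intro!: sum.cong)
  also have "(\<Sum>\<rho>\<in>Bad. cmod (T \<rho>)) \<le> real s * real p"
  proof -
    have "cmod (T \<rho>) \<le> real p" for \<rho>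
    proof -
      have "cmod (T \<rho>) \<le> (\<Sum>m<L \<rho>. cmod (e_p p (fq_phase s p a (u \<rho> + int p * int m))))"
        unfolding T_def by (rule norm_sum)
      then show ?thesis
        using L[of \<rho>] by simp
    qed
    then have "(\<Sum>\<rho>\<in>Bad. cmod (T \<rho>)) \<le> real (card Bad) * real p"
      by (rule sum_bounded_above)
    also have "\<dots> \<le> real s * real p"
      using card_residues_meeting_multiple_le[of p s "M + 1"] unfolding Bad_def u_def
      by (intro mult_right_mono) (auto simp: add.assoc)
    finally show ?thesis .
  qed
  also have "(\<Sum>\<rho>\<in>Good. cmod (T \<rho>)) \<le> (\<Sum>\<rho>\<in>Good. geom_sum_bound p (\<tau> \<rho>))"
    unfolding T_def \<tau>_def using p L by (intro sum_mono norm_residue_class_sum_le) (auto simp: Good_def)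
  also have "\<dots> \<le> real s * (\<Sum>t<p. geom_sum_bound p t)"
  proof (rule sum_comp_le_card_fiber_mult)
    show "\<tau> ` Good \<subseteq> {..<p}"
      unfolding \<tau>_def using p2 by (auto simp: nat_less_iff)
    show "card {\<rho> \<in> Good. \<tau> \<rho> = t} \<le> s" for t
      using card_slope_fiber_le[of p s k a "M + 1" t] p assms(4-6)
      unfolding Good_def \<tau>_def u_def by (simp add: add.assoc)
  qed (auto simp: Good_def geom_sum_bound_nonneg)
  also have "\<dots> \<le> real s * (real p * (5 + 4 * ln (real p)))"
    using sum_geom_sum_bound_le[OF p2] by (intro mult_left_mono) auto
  finally show ?thesis
    by (simp add: algebra_simps)
qed

lemma norm_S_sum_le:
  assumes p: "prime p" and N: "1 \<le> N" "N < int p ^ 2" and "k < s" and "\<not> int p dvd a k"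
  shows "cmod (S_sum s p M N a) \<le> real s * real p * (6 + 4 * ln (real p))"
proof (cases "s < p")
  case True
  show ?thesis
    using norm_S_sum_le_of_less[where k = k and a = a, OF p N True assms(4,5)] .
next
  case False
  have "0 \<le> ln (real p)"
    using prime_gt_1_nat[OF p] by simp
  have "cmod (S_sum s p M N a) \<le> real p * real p"
    using norm_S_sum_le_length[OF N(1), of s p M a] N(2) of_int_less_iff[of N "int p ^ 2", where 'a = real]
    by (simp add: power2_eq_square)
  also have "\<dots> \<le> real s * real p * 1"
    using False by (simp add: mult_right_mono)
  also have "\<dots> \<le> real s * real p * (6 + 4 * ln (real p))"
    using \<open>0 \<le> ln (real p)\<close> by (intro mult_left_mono) auto
  finally show ?thesis .
qed

lemma exists_not_dvd_if_Gcd_insert_eq_1: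
  fixes b :: int
  assumes "Gcd (insert b (a ` A)) = 1" and "\<not> is_unit b"
  shows "\<exists>k\<in>A. \<not> b dvd a k"
proof (rule ccontr)
  assume "\<not> (\<exists>k\<in>A. \<not> b dvd a k)"
  then have "b dvd Gcd (insert b (a ` A))"
    by (intro Gcd_greatest) auto
  with assms show False
    by simp
qed

theorem theorem11:
  fixes s :: nat
  assumes "s \<ge> 1"
  shows "\<exists>c>0. \<forall>(p::nat) (M::int) (N::int) (a::nat \<Rightarrow> int).
           prime p \<longrightarrow> 1 \<le> N \<longrightarrow> N < int p ^ 2 \<longrightarrow>
           Gcd (insert (int p) (a ` {..<s})) = 1 \<longrightarrow>
           cmod (S_sum s p M N a) \<le> c * real s * real p * ln (real p)"
proof (intro exI[of _ 13] conjI allI impI)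
  fix p :: nat and M N :: int and a :: "nat \<Rightarrow> int"
  assume p: "prime p" and N: "1 \<le> N" "N < int p ^ 2"
    and gcd: "Gcd (insert (int p) (a ` {..<s})) = 1"
  obtain k where "k < s" "\<not> int p dvd a k"
    using exists_not_dvd_if_Gcd_insert_eq_1[OF gcd] prime_ge_2_nat[OF p] by auto
  then have "cmod (S_sum s p M N a) \<le> real s * real p * (6 + 4 * ln (real p))"
    using norm_S_sum_le[OF p N] by blast
  also have "\<dots> \<le> real s * real p * (13 * ln (real p))"
  proof -
    have "ln 2 \<le> ln (real p)"
      using prime_ge_2_nat[OF p] by simp
    then show ?thesis
      using ln2_ge_two_thirds by (intro mult_left_mono) auto
  qed
  finally show "cmod (S_sum s p M N a) \<le> 13 * real s * real p * ln (real p)"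
    by (simp add: ac_simps)
qed simp

end
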